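(* For any $\beta\in[0,\infty)$ there exists a weight sequence $\boldsymbol{M}^\beta$ such that: (i) $\boldsymbol{M}^\beta$ does not satisfy $\operatorname{(sm)}$ (and hence not $\operatorname{(dc)}$ either); (ii) $\gamma(\boldsymbol{M}^\beta)=\beta$.
   Context: A weight sequence is a sequence $\boldsymbol{M}=(M_p)_{p\in\mathbb{N}_0}$ of positive reals with $M_0=1$, $M_p^2\le M_{p-1}M_{p+1}$ ($p\ge1$) and $m_p=M_{p+1}/M_p\to\infty$. $\operatorname{(sm)}$: $\log(m_{p+1}/m_p)\le C_0H^{p+1}$ for all $p$, some $C_0>0$, $H>1$. $\operatorname{(dc)}$: $M_{p+1}\le C_0H^{p+1}M_p$ for all $p$, some $C_0>0$, $H>1$. Almost increasing: $c_p\le ac_q$ for $q\ge p$, some $a>0$. $\gamma(\boldsymbol{M})=\sup\{\mu>0:(m_p/(p+1)^\mu)_p\text{ almost increasing}\}\in[0,\infty]$. *)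

theory Defs
  imports Complex_Main "HOL-Library.Extended_Real"
begin

definition quot_seq :: "(nat \<Rightarrow> real) \<Rightarrow> nat \<Rightarrow> real" where
  "quot_seq M p = M (Suc p) / M p"

definition weight_sequence :: "(nat \<Rightarrow> real) \<Rightarrow> bool" where
  "weight_sequence M \<longleftrightarrow>
     (\<forall>p. M p > 0) \<and> M 0 = 1 \<and>
     (\<forall>p\<ge>1. (M p)^2 \<le> M (p - 1) * M (p + 1)) \<and>
     filterlim (quot_seq M) at_top sequentially"

definition cond_sm :: "(nat \<Rightarrow> real) \<Rightarrow> bool" where
  "cond_sm M \<longleftrightarrow> (\<exists>C0>0. \<exists>H>1. \<forall>p.
     ln (quot_seq M (p + 1) / quot_seq M p) \<le> C0 * H ^ (p + 1))"

definition cond_dc :: "(nat \<Rightarrow> real) \<Rightarrow> bool" where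
  "cond_dc M \<longleftrightarrow> (\<exists>C0>0. \<exists>H>1. \<forall>p. M (p + 1) \<le> C0 * H ^ (p + 1) * M p)"

definition almost_increasing :: "(nat \<Rightarrow> real) \<Rightarrow> bool" where
  "almost_increasing c \<longleftrightarrow> (\<exists>a>0. \<forall>p q. p \<le> q \<longrightarrow> c p \<le> a * c q)"

text \<open>gamma index; the supremum of the empty set is taken to be 0 (value range [0,\<infinity>]).\<close>
definition gamma_idx :: "(nat \<Rightarrow> real) \<Rightarrow> ereal" where
  "gamma_idx M = Sup (insert 0 (ereal ` {\<mu>. \<mu> > 0 \<and>
     almost_increasing (\<lambda>p. quot_seq M p / (real p + 1) powr \<mu>)}))"

end

theory Submission
  imports Defs "HOL-Real_Asymp.Real_Asymp"
begin

text \<open>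
  Take \<open>m\<^sub>p = (p + 1)\<^sup>\<beta> exp (T p)\<close>, where the staircase \<open>T\<close> jumps by
  \<open>exp ((q\<^sub>k + 1)\<^sup>2)\<close> right after \<open>q\<^sub>k = (k + 1)!\<close> and is constant in between.
  These jumps outgrow every geometric sequence \<open>C H\<^sup>p\<close>, so \<open>(sm)\<close> fails; and \<open>(dc)\<close>
  implies \<open>(sm)\<close> because the quotients of a weight sequence increase, so that
  \<open>ln (m\<^bsub>p+1\<^esub> / m\<^sub>p) \<le> ln (m\<^bsub>p+1\<^esub> / m\<^sub>0) = O(p)\<close> under \<open>(dc)\<close>.
  For \<open>\<mu> \<le> \<beta>\<close> the sequence \<open>m\<^sub>p / (p + 1)\<^sup>\<mu>\<close> is increasing; for \<open>\<mu> > \<beta>\<close> it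
  drops by the factor \<open>((q\<^bsub>k+1\<^esub> + 1) / (q\<^sub>k + 2))\<^bsup>\<mu>-\<beta>\<^esup> \<ge> ((k + 2) / 3)\<^bsup>\<mu>-\<beta>\<^esup>\<close>
  along the flat stretch \<open>[q\<^sub>k + 1, q\<^bsub>k+1\<^esub>]\<close>, so it is not almost increasing.
\<close>

definition quot_prod :: "(nat \<Rightarrow> real) \<Rightarrow> nat \<Rightarrow> real" where
  "quot_prod m p = (\<Prod>i<p. m i)"

lemma quot_seq_quot_prod:
  assumes "\<And>p. m p > 0"
  shows "quot_seq (quot_prod m) = m"
  using assms by (auto simp: fun_eq_iff quot_seq_def quot_prod_def prod_pos less_imp_neq[symmetric])

lemma weight_sequence_quot_prod:
  assumes pos: "\<And>p. m p > 0" and "mono m" and "filterlim m at_top sequentially"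
  shows "weight_sequence (quot_prod m)"
  unfolding weight_sequence_def quot_seq_quot_prod[OF pos]
proof (intro conjI allI impI)
  fix p :: nat
  show M_pos: "quot_prod m p > 0" for p
    unfolding quot_prod_def using pos by (simp add: prod_pos)
  assume "p \<ge> 1"
  then obtain r where p: "p = Suc r" by (cases p) auto
  have "m r \<le> m (Suc r)" using \<open>mono m\<close> by (simp add: monoD)
  then have "(quot_prod m r * m r) * (quot_prod m r * m r)
      \<le> (quot_prod m r * m r) * (quot_prod m r * m (Suc r))"
    using pos[of r] M_pos[of r] by (intro mult_left_mono) auto
  then show "(quot_prod m p)^2 \<le> quot_prod m (p - 1) * quot_prod m (p + 1)"
    unfolding p quot_prod_def by (simp add: power2_eq_square algebra_simps)
qed (use assms in \<open>simp_all add: quot_prod_def\<close>)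

lemma weight_sequence_quot_seq_mono:
  assumes "weight_sequence M"
  shows "mono (quot_seq M)"
proof (rule incseq_SucI)
  fix p
  have pos: "\<And>p. M p > 0" and "M (Suc p)^2 \<le> M p * M (Suc (Suc p))"
    using assms unfolding weight_sequence_def by (auto dest: spec[of _ "Suc p"])
  then show "quot_seq M p \<le> quot_seq M (Suc p)"
    unfolding quot_seq_def using pos[of p] pos[of "Suc p"]
    by (simp add: divide_simps power2_eq_square mult.commute)
qed

lemma cond_sm_if_cond_dc:
  assumes "weight_sequence M" and "cond_dc M"
  shows "cond_sm M"
proof -
  obtain C H where "C > 0" "H > 1" and dc: "\<And>p. M (p + 1) \<le> C * H ^ (p + 1) * M p"
    using assms(2) unfolding cond_dc_def by blast
  have pos: "\<And>p. M p > 0" using assms(1) unfolding weight_sequence_def by blast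
  then have quot_pos: "quot_seq M p > 0" for p by (simp add: quot_seq_def)
  have quot_le: "quot_seq M p \<le> C * H ^ (p + 1)" for p
    using dc[of p] pos[of p] by (simp add: quot_seq_def pos_divide_le_eq)
  have "mono (quot_seq M)" by (rule weight_sequence_quot_seq_mono[OF assms(1)])
  then have quot_ge: "quot_seq M 0 \<le> quot_seq M p" for p by (simp add: monoD)
  define K where "K = \<bar>ln C - ln (quot_seq M 0)\<bar> + ln H"
  show ?thesis
    unfolding cond_sm_def
  proof (rule exI[of _ K], intro conjI exI[of _ "2::real"] allI)
    show "K > 0" using \<open>H > 1\<close> by (simp add: K_def add_nonneg_pos)
    fix p :: nat
    have "real (Suc (p + 1)) \<le> real (2 ^ (p + 1))"
      using less_exp[of "p + 1"] by (intro of_nat_mono Suc_leI)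
    then have pow: "real (p + 2) \<le> 2 ^ (p + 1)" by simp
    have "ln (quot_seq M (p + 1) / quot_seq M p) = ln (quot_seq M (p + 1)) - ln (quot_seq M p)"
      using quot_pos[of p] quot_pos[of "p + 1"] by (simp add: ln_div)
    also have "\<dots> \<le> ln (C * H ^ (p + 2)) - ln (quot_seq M 0)"
      using quot_le[of "p + 1"] quot_ge[of p] quot_pos \<open>C > 0\<close> \<open>H > 1\<close>
      by (intro diff_mono) (simp_all add: ac_simps)
    also have "\<dots> = (ln C - ln (quot_seq M 0)) + real (p + 2) * ln H"
      using \<open>C > 0\<close> \<open>H > 1\<close> by (simp add: ln_mult ln_realpow algebra_simps)
    also have "\<dots> \<le> \<bar>ln C - ln (quot_seq M 0)\<bar> * 2 ^ (p + 1) + 2 ^ (p + 1) * ln H"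
    proof (intro add_mono mult_right_mono)
      have "(1::real) \<le> 2 ^ (p + 1)" by (rule one_le_power) simp
      then have "\<bar>ln C - ln (quot_seq M 0)\<bar> * 1 \<le> \<bar>ln C - ln (quot_seq M 0)\<bar> * 2 ^ (p + 1)"
        by (rule mult_left_mono) simp
      then show "ln C - ln (quot_seq M 0) \<le> \<bar>ln C - ln (quot_seq M 0)\<bar> * 2 ^ (p + 1)"
        using abs_ge_self[of "ln C - ln (quot_seq M 0)"] by (metis mult.right_neutral order_trans)
    qed (use pow \<open>H > 1\<close> in auto)
    also have "\<dots> = K * 2 ^ (p + 1)" by (simp add: K_def algebra_simps)
    finally show "ln (quot_seq M (p + 1) / quot_seq M p) \<le> K * 2 ^ (p + 1)" .
  qed simp
qed

lemma gamma_idx_eqI: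
  assumes "\<beta> \<ge> 0"
    and "\<And>\<mu>. \<mu> > 0 \<Longrightarrow> almost_increasing (\<lambda>p. quot_seq M p / (real p + 1) powr \<mu>) \<longleftrightarrow> \<mu> \<le> \<beta>"
  shows "gamma_idx M = ereal \<beta>"
proof -
  have "{\<mu>. \<mu> > 0 \<and> almost_increasing (\<lambda>p. quot_seq M p / (real p + 1) powr \<mu>)} = {0<..\<beta>}"
    using assms(2) by auto
  then have gamma: "gamma_idx M = Sup (insert 0 (ereal ` {0<..\<beta>}))"
    unfolding gamma_idx_def by simp
  show ?thesis
    unfolding gamma
  proof (rule antisym)
    show "Sup (insert 0 (ereal ` {0<..\<beta>})) \<le> ereal \<beta>"
      using assms(1) by (auto intro!: Sup_least)
    show "ereal \<beta> \<le> Sup (insert 0 (ereal ` {0<..\<beta>}))"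
    proof (cases "\<beta> = 0")
      case False
      then show ?thesis using assms(1) by (intro Sup_upper) auto
    qed (simp add: Sup_upper zero_ereal_def)
  qed
qed

lemma almost_increasing_if_mono: "mono c \<Longrightarrow> almost_increasing c"
  unfolding almost_increasing_def by (auto intro!: exI[of _ 1] dest: monoD)

lemma not_almost_increasing_flat_stretches:
  assumes "d > 0"
    and stretch: "\<And>k. a k \<le> b k" "\<And>k. T (a k) = T (b k)"
    and ratio: "filterlim (\<lambda>k. (real (b k) + 1) / (real (a k) + 1)) at_top sequentially"
  shows "\<not> almost_increasing (\<lambda>p. (real p + 1) powr (- d) * exp (T p))"
proof
  assume "almost_increasing (\<lambda>p. (real p + 1) powr (- d) * exp (T p))"
  then obtain c where ai: "\<And>p q. p \<le> q \<Longrightarrow>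
      (real p + 1) powr (- d) * exp (T p) \<le> c * ((real q + 1) powr (- d) * exp (T q))"
    unfolding almost_increasing_def by blast
  have "filterlim (\<lambda>x::real. x powr d) at_top at_top" using \<open>d > 0\<close> by real_asymp
  from filterlim_compose[OF this ratio]
  have "eventually (\<lambda>k. ((real (b k) + 1) / (real (a k) + 1)) powr d > c) sequentially"
    by (simp add: filterlim_at_top_dense)
  then obtain k where k: "((real (b k) + 1) / (real (a k) + 1)) powr d > c"
    by (auto simp: eventually_sequentially)
  have "(real (a k) + 1) powr (- d) \<le> c * (real (b k) + 1) powr (- d)"
    using ai[OF stretch(1)[of k]] stretch(2)[of k] by simp
  then have "(real (b k) + 1) powr d \<le> c * (real (a k) + 1) powr d"
    by (simp add: powr_minus field_simps)
  then have "((real (b k) + 1) / (real (a k) + 1)) powr d \<le> c"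
    by (simp add: powr_divide field_simps)
  with k show False by simp
qed

definition jump_point :: "nat \<Rightarrow> nat" where
  "jump_point k = fact (Suc k)"

definition jump_height :: "nat \<Rightarrow> real" where
  "jump_height k = exp ((real (jump_point k) + 1)^2)"

definition staircase :: "nat \<Rightarrow> real" where
  "staircase p = (\<Sum>j | jump_point j < p. jump_height j)"

definition staircase_quot :: "real \<Rightarrow> nat \<Rightarrow> real" where
  "staircase_quot \<beta> p = (real p + 1) powr \<beta> * exp (staircase p)"

lemma jump_point_Suc: "jump_point (Suc k) = (k + 2) * jump_point k"
  unfolding jump_point_def by (simp add: fact_Suc[of "Suc k"])

lemma jump_point_gt: "k < jump_point k"
  using fact_ge_self[of "Suc k"] unfolding jump_point_def by simp

lemma strict_mono_jump_point: "strict_mono jump_point"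
  unfolding strict_mono_Suc_iff jump_point_Suc by (simp add: jump_point_def)

lemma real_jump_point_less_jump_height: "real (jump_point k) < jump_height k"
proof -
  have "real (jump_point k) < 1 + (real (jump_point k) + 1)^2"
    by (simp add: power2_eq_square algebra_simps add_nonneg_pos add_pos_nonneg)
  also have "\<dots> \<le> jump_height k"
    unfolding jump_height_def by (rule exp_ge_add_one_self)
  finally show ?thesis .
qed

lemma jump_height_exceeds_geometric:
  assumes "C > 0" "H > 1"
  shows "\<exists>k. C * H ^ Suc (jump_point k) < jump_height k"
proof -
  have "(\<lambda>n::nat. C * H ^ Suc n / exp ((real n + 1)^2)) \<longlonglongrightarrow> 0"
    using assms by real_asymp
  then have "eventually (\<lambda>n. C * H ^ Suc n / exp ((real n + 1)^2) < 1) sequentially"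
    by (rule order_tendstoD) simp
  then obtain N where "\<And>n. n \<ge> N \<Longrightarrow> C * H ^ Suc n < exp ((real n + 1)^2)"
    by (auto simp: eventually_sequentially)
  then show ?thesis
    using jump_point_gt[of N] unfolding jump_height_def by (meson less_imp_le)
qed

lemma staircase_mono: "mono staircase"
proof
  fix p p' :: nat
  assume "p \<le> p'"
  have "finite {j. jump_point j < p'}"
    by (rule finite_subset[of _ "{..<p'}"]) (use jump_point_gt less_trans in auto)
  with \<open>p \<le> p'\<close> show "staircase p \<le> staircase p'"
    unfolding staircase_def by (intro sum_mono2) (auto simp: jump_height_def)
qed

lemma staircase_nonneg: "staircase p \<ge> 0"
  unfolding staircase_def jump_height_def by (simp add: sum_nonneg)

lemma jumps_before_jump_point: "{j. jump_point j < jump_point k} = {..<k}"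
  using strict_mono_less[OF strict_mono_jump_point] by auto

lemma jumps_before_Suc_jump_point: "{j. jump_point j < Suc (jump_point k)} = {..k}"
  using strict_mono_less_eq[OF strict_mono_jump_point] by (auto simp: less_Suc_eq_le)

lemma staircase_jump: "staircase (Suc (jump_point k)) = staircase (jump_point k) + jump_height k"
  unfolding staircase_def jumps_before_jump_point jumps_before_Suc_jump_point
  by (simp add: lessThan_Suc_atMost[symmetric])

lemma staircase_flat: "staircase (Suc (jump_point k)) = staircase (jump_point (Suc k))"
  unfolding staircase_def jumps_before_jump_point jumps_before_Suc_jump_point
  by (simp add: lessThan_Suc_atMost)

lemma staircase_at_top: "filterlim staircase at_top sequentially"
  unfolding filterlim_at_top eventually_sequentially
proof (intro allI exI impI)
  fix Z :: real and p
  define k where "k = nat \<lceil>Z\<rceil>"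
  assume "Suc (jump_point k) \<le> p"
  have "Z \<le> real k" unfolding k_def by linarith
  also have "\<dots> < jump_height k"
    using jump_point_gt[of k] real_jump_point_less_jump_height[of k] by linarith
  also have "\<dots> \<le> staircase (Suc (jump_point k))"
    using staircase_jump staircase_nonneg by simp
  also have "\<dots> \<le> staircase p"
    using staircase_mono \<open>Suc (jump_point k) \<le> p\<close> by (simp add: monoD)
  finally show "Z \<le> staircase p" by simp
qed

lemma flat_stretch_ratio:
  "(real k + 2) / 3 \<le> (real (jump_point (Suc k)) + 1) / (real (Suc (jump_point k)) + 1)"
proof -
  define x where "x = real (jump_point k)"
  have "1 \<le> x" using jump_point_gt[of k] unfolding x_def by linarith
  then have "(real k + 2) * 1 \<le> (real k + 2) * x" by (intro mult_left_mono) auto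
  moreover have "real (jump_point (Suc k)) = (real k + 2) * x"
    unfolding jump_point_Suc x_def by (simp add: algebra_simps)
  ultimately show ?thesis
    using \<open>1 \<le> x\<close> unfolding x_def by (simp add: field_simps)
qed

lemma staircase_quot_pos: "staircase_quot \<beta> p > 0"
  unfolding staircase_quot_def by simp

lemma mono_staircase_quot: "\<beta> \<ge> 0 \<Longrightarrow> mono (staircase_quot \<beta>)"
  unfolding staircase_quot_def
  by (intro monoI mult_mono powr_mono2) (auto intro: monoD[OF staircase_mono])

lemma staircase_quot_at_top: "\<beta> \<ge> 0 \<Longrightarrow> filterlim (staircase_quot \<beta>) at_top sequentially"
proof (rule filterlim_at_top_mono[OF staircase_at_top always_eventually, rule_format])
  fix p
  assume "\<beta> \<ge> 0"
  have "staircase p \<le> exp (staircase p)"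
    using exp_ge_add_one_self[of "staircase p"] by linarith
  also have "\<dots> \<le> staircase_quot \<beta> p"
    unfolding staircase_quot_def using \<open>\<beta> \<ge> 0\<close> by (simp add: ge_one_powr_ge_zero)
  finally show "staircase p \<le> staircase_quot \<beta> p" .
qed

lemma not_cond_sm_staircase:
  assumes "\<beta> \<ge> 0"
  shows "\<not> cond_sm (quot_prod (staircase_quot \<beta>))"
proof
  assume "cond_sm (quot_prod (staircase_quot \<beta>))"
  then obtain C H where "C > 0" "H > 1" and sm: "\<And>p.
      ln (staircase_quot \<beta> (p + 1) / staircase_quot \<beta> p) \<le> C * H ^ (p + 1)"
    unfolding cond_sm_def quot_seq_quot_prod[OF staircase_quot_pos] by blast
  obtain k where k: "C * H ^ Suc (jump_point k) < jump_height k"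
    using jump_height_exceeds_geometric[OF \<open>C > 0\<close> \<open>H > 1\<close>] by blast
  let ?p = "jump_point k"
  have "staircase_quot \<beta> ?p * exp (jump_height k) \<le> staircase_quot \<beta> (Suc ?p)"
    unfolding staircase_quot_def staircase_jump exp_add mult.assoc[symmetric]
    using assms by (intro mult_right_mono powr_mono2) auto
  then have "exp (jump_height k) \<le> staircase_quot \<beta> (Suc ?p) / staircase_quot \<beta> ?p"
    using staircase_quot_pos by (simp add: pos_le_divide_eq mult.commute)
  then have "jump_height k \<le> ln (staircase_quot \<beta> (Suc ?p) / staircase_quot \<beta> ?p)"
    using staircase_quot_pos by (subst ln_ge_iff) auto
  with sm[of ?p] k show False by simp
qed

lemma almost_increasing_staircase_quot_iff:
  "almost_increasing (\<lambda>p. quot_seq (quot_prod (staircase_quot \<beta>)) p / (real p + 1) powr \<mu>)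
    \<longleftrightarrow> \<mu> \<le> \<beta>"
proof -
  have quot: "quot_seq (quot_prod (staircase_quot \<beta>)) p / (real p + 1) powr \<mu>
      = (real p + 1) powr (- (\<mu> - \<beta>)) * exp (staircase p)" for p
    unfolding quot_seq_quot_prod[OF staircase_quot_pos] staircase_quot_def
    by (simp add: powr_diff)
  show ?thesis
    unfolding quot
  proof
    assume "\<mu> \<le> \<beta>"
    then show "almost_increasing (\<lambda>p. (real p + 1) powr (- (\<mu> - \<beta>)) * exp (staircase p))"
      by (intro almost_increasing_if_mono monoI mult_mono powr_mono2)
        (auto intro: monoD[OF staircase_mono])
  next
    have "filterlim (\<lambda>k. (real k + 2) / 3) at_top sequentially" by real_asymp
    then have "filterlim (\<lambda>k. (real (jump_point (Suc k)) + 1) / (real (Suc (jump_point k)) + 1))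
        at_top sequentially"
      by (rule filterlim_at_top_mono) (intro always_eventually allI flat_stretch_ratio)
    moreover have "Suc (jump_point k) \<le> jump_point (Suc k)" for k
      using strict_mono_jump_point by (simp add: Suc_leI strict_mono_less)
    ultimately show "\<mu> \<le> \<beta>"
      if "almost_increasing (\<lambda>p. (real p + 1) powr (- (\<mu> - \<beta>)) * exp (staircase p))"
      using not_almost_increasing_flat_stretches[of "\<mu> - \<beta>", OF _ _ staircase_flat] that
      by (cases "\<mu> \<le> \<beta>") auto
  qed
qed

theorem corollary4p13:
  fixes \<beta> :: real
  assumes "\<beta> \<ge> 0"
  shows "\<exists>M. weight_sequence M \<and> \<not> cond_sm M \<and> \<not> cond_dc M \<and> gamma_idx M = ereal \<beta>"
proof -
  let ?M = "quot_prod (staircase_quot \<beta>)"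
  have weight: "weight_sequence ?M"
    using staircase_quot_pos mono_staircase_quot[OF assms] staircase_quot_at_top[OF assms]
    by (rule weight_sequence_quot_prod)
  moreover have "\<not> cond_sm ?M" by (rule not_cond_sm_staircase[OF assms])
  moreover from this have "\<not> cond_dc ?M" using cond_sm_if_cond_dc[OF weight] by blast
  moreover have "gamma_idx ?M = ereal \<beta>"
    using assms by (rule gamma_idx_eqI) (rule almost_increasing_staircase_quot_iff)
  ultimately show ?thesis by blast
qed

end
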